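(* Let $1<n\leq m$ and let $v\in Z_{n,m}$ with $\sum_{i\in I_c(v)}v_i=n$. Then $d(v,0)\leq\sum_{i=1}^{p_l(v)}i+\sum_{i=1}^{m-p_r(v)}i+\lfloor\frac{n(m+1)}{2}\rfloor$.
   Context: Elements of $\mathbb{Z}_n$ are identified with representatives in $\{0,\dots,n-1\}$ (so $v_0,v_{m+1}$ are such integers in sums). $Z_{n,m}$ has vertices $u=(u_0,\dots,u_{m+1})\in\mathbb{Z}_n\times\{-1,0,1\}^m\times\mathbb{Z}_n$ with $\sum u_i\equiv0\pmod n$; $u,v$ adjacent if there is $0\leq i\leq m$ with $u_j=v_j$ for $j\notin\{i,i+1\}$ and either ($u_i=v_i+1$, $u_{i+1}=v_{i+1}-1$) or ($u_i=v_i-1$, $u_{i+1}=v_{i+1}+1$), arithmetic in coordinates $0,m+1$ in $\mathbb{Z}_n$. $d$ is graph distance, $0$ the all-zero vertex. $\operatorname{Piv}(v)$ is the set of integers $-1\le p\le m+1$ with $n\mid\sum_{i=0}^pv_i$ (empty sum $0$). $p_l(v)=\max\{p\in\operatorname{Piv}(v):p<\frac m2\}$, $p_r(v)=\min\{p\in\operatorname{Piv}(v):p\ge\frac m2\}$, $I_c(v)=\{p_l(v)+1,\dots,p_r(v)\}$. Sums $\sum_{i=1}^k i$ with $k\le0$ are $0$. *)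

theory Defs
  imports Main "HOL-Library.Extended_Nat"
begin

text \<open>Vertices of Z_{n,m} are represented as functions u :: nat => int with
  u 0, u (m+1) in {0..n-1} (representatives of Z_n), u i in {-1,0,1} for 1 <= i <= m,
  u i = 0 for i > m+1, and sum of u_0..u_{m+1} divisible by n.\<close>

definition Zvert :: "nat \<Rightarrow> nat \<Rightarrow> (nat \<Rightarrow> int) \<Rightarrow> bool" where
  "Zvert n m u \<longleftrightarrow>
     u 0 \<in> {0..<int n} \<and> u (m+1) \<in> {0..<int n} \<and>
     (\<forall>i\<in>{1..m}. u i \<in> {-1,0,1}) \<and>
     (\<forall>i>m+1. u i = 0) \<and>
     int n dvd (\<Sum>i\<le>m+1. u i)"

definition coord_eq :: "nat \<Rightarrow> nat \<Rightarrow> nat \<Rightarrow> int \<Rightarrow> int \<Rightarrow> int \<Rightarrow> bool" where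
  "coord_eq n m c a b d \<longleftrightarrow>
     (if c = 0 \<or> c = m+1 then a mod int n = (b + d) mod int n else a = b + d)"

definition Zadj :: "nat \<Rightarrow> nat \<Rightarrow> (nat \<Rightarrow> int) \<Rightarrow> (nat \<Rightarrow> int) \<Rightarrow> bool" where
  "Zadj n m u v \<longleftrightarrow> Zvert n m u \<and> Zvert n m v \<and>
     (\<exists>i\<le>m. (\<forall>j\<le>m+1. j \<notin> {i, i+1} \<longrightarrow> u j = v j) \<and>
        ((coord_eq n m i (u i) (v i) 1 \<and> coord_eq n m (i+1) (u (i+1)) (v (i+1)) (-1)) \<or>
         (coord_eq n m i (u i) (v i) (-1) \<and> coord_eq n m (i+1) (u (i+1)) (v (i+1)) 1)))"

definition Zwalk :: "nat \<Rightarrow> nat \<Rightarrow> (nat \<Rightarrow> int) \<Rightarrow> (nat \<Rightarrow> int) \<Rightarrow> nat \<Rightarrow> bool" where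
  "Zwalk n m u v k \<longleftrightarrow> (\<exists>f :: nat \<Rightarrow> nat \<Rightarrow> int.
     f 0 = u \<and> f k = v \<and> (\<forall>i\<le>k. Zvert n m (f i)) \<and> (\<forall>i<k. Zadj n m (f i) (f (Suc i))))"

text \<open>Graph distance (infinite if no walk exists).\<close>
definition Zdist :: "nat \<Rightarrow> nat \<Rightarrow> (nat \<Rightarrow> int) \<Rightarrow> (nat \<Rightarrow> int) \<Rightarrow> enat" where
  "Zdist n m u v = (INF k \<in> {k. Zwalk n m u v k}. enat k)"

definition Zzero :: "nat \<Rightarrow> int" where "Zzero = (\<lambda>_. 0)"

definition Piv :: "nat \<Rightarrow> nat \<Rightarrow> (nat \<Rightarrow> int) \<Rightarrow> int set" where
  "Piv n m v = {p. -1 \<le> p \<and> p \<le> int m + 1 \<and> int n dvd (\<Sum>i\<in>{0..p}. v (nat i))}"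

definition p_l :: "nat \<Rightarrow> nat \<Rightarrow> (nat \<Rightarrow> int) \<Rightarrow> int" where
  "p_l n m v = Max {p \<in> Piv n m v. 2 * p < int m}"

definition p_r :: "nat \<Rightarrow> nat \<Rightarrow> (nat \<Rightarrow> int) \<Rightarrow> int" where
  "p_r n m v = Min {p \<in> Piv n m v. 2 * p \<ge> int m}"

definition I_c :: "nat \<Rightarrow> nat \<Rightarrow> (nat \<Rightarrow> int) \<Rightarrow> int set" where
  "I_c n m v = {p_l n m v + 1 .. p_r n m v}"

end

theory Submission
  imports Defs
begin

text \<open>Write s_i = v_0 + ... + v_i for the prefix sums of a vertex v. For every multiple K
  of n, the potential sum_{i<=m} |s_i - K| bounds d(v,0): at an index where s_i is farthest
  from K, shifting one unit between coordinates i and i+1 is an edge that lowers the potential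
  by one (after replacing K by another multiple of n if coordinate 0 wraps around), and
  potential 0 forces v = 0. Let A and B = A + n be the prefix sums at the pivots p_l and p_r.
  Prefix sums change by at most one per step and no multiple of n occurs strictly between the
  pivots, so all prefix sums there lie in [A, B], while outside they move away from A resp. B
  at most linearly. Hence the two potentials sum to at most
  n(m+1) + p_l(p_l+1) + (m-p_r)(m-p_r+1), and the smaller one gives the bound.\<close>

definition prefix_sum :: "(nat \<Rightarrow> int) \<Rightarrow> nat \<Rightarrow> int" where
  "prefix_sum v i = (\<Sum>j\<le>i. v j)"

lemma prefix_sum_0 [simp]: "prefix_sum v 0 = v 0"
  by (simp add: prefix_sum_def)

lemma prefix_sum_Suc [simp]: "prefix_sum v (Suc i) = prefix_sum v i + v (Suc i)"
  by (simp add: prefix_sum_def)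

lemma prefix_sum_update_pair:
  "prefix_sum (v(k := v k + d, Suc k := v (Suc k) - d)) i
     = prefix_sum v i + (if i = k then d else 0)"
  by (induction i) auto

lemma prefix_sum_step:
  "Zvert n m v \<Longrightarrow> k < m \<Longrightarrow> \<bar>prefix_sum v (Suc k) - prefix_sum v k\<bar> \<le> 1"
  by (auto simp: Zvert_def dest!: bspec[of _ _ "Suc k"])

lemma prefix_sum_lipschitz:
  assumes "Zvert n m v" and "i \<le> j" and "j \<le> m"
  shows "\<bar>prefix_sum v j - prefix_sum v i\<bar> \<le> int j - int i"
  using assms(2,3)
proof (induction j)
  case (Suc j)
  then show ?case
    using prefix_sum_step[OF assms(1), of j] by (cases "i = Suc j") auto
qed simp

lemma prefix_sum_intermediate_value:
  assumes "Zvert n m v" and "i \<le> j" and "j \<le> m"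
    and "prefix_sum v i \<le> c" and "c \<le> prefix_sum v j"
  shows "\<exists>k. i \<le> k \<and> k \<le> j \<and> prefix_sum v k = c"
  using assms prefix_sum_step[OF assms(1)] by (intro nat_intermed_int_val) auto

definition Zreduce :: "nat \<Rightarrow> nat \<Rightarrow> (nat \<Rightarrow> int) \<Rightarrow> nat \<Rightarrow> int" where
  "Zreduce n m u j = (if j = 0 \<or> j = m + 1 then u j mod int n else u j)"

definition Zmove :: "nat \<Rightarrow> nat \<Rightarrow> (nat \<Rightarrow> int) \<Rightarrow> nat \<Rightarrow> int \<Rightarrow> nat \<Rightarrow> int" where
  "Zmove n m v k d = Zreduce n m (v(k := v k + d, Suc k := v (Suc k) - d))"

lemma prefix_sum_Zreduce:
  "i \<le> m \<Longrightarrow> prefix_sum (Zreduce n m u) i = prefix_sum u i - (u 0 - u 0 mod int n)"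
  by (induction i) (auto simp: Zreduce_def)

lemma Zvert_Zreduce:
  assumes "\<forall>i\<in>{1..m}. u i \<in> {-1,0,1}" and "\<forall>i>m+1. u i = 0"
    and "int n dvd (\<Sum>i\<le>m+1. u i)" and "0 < n"
  shows "Zvert n m (Zreduce n m u)"
proof -
  have "(\<Sum>i\<le>m+1. Zreduce n m u i)
      = (\<Sum>i\<le>m+1. u i) - (u 0 - u 0 mod int n) - (u (m+1) - u (m+1) mod int n)"
    using prefix_sum_Zreduce[of m m n u] by (simp add: prefix_sum_def Zreduce_def)
  also have "int n dvd \<dots>"
    using assms(3) by (intro dvd_diff dvd_minus_mod)
  finally show ?thesis
    using assms by (simp add: Zvert_def Zreduce_def)
qed

text \<open>Reducing coordinate 0 modulo n shifts all prefix sums by the same multiple of n.\<close>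

lemma prefix_sum_Zmove:
  obtains \<alpha> where "int n dvd \<alpha>"
    and "\<And>i. i \<le> m \<Longrightarrow>
      prefix_sum (Zmove n m v k d) i = prefix_sum v i + (if i = k then d else 0) - \<alpha>"
proof -
  define u where "u = v(k := v k + d, Suc k := v (Suc k) - d)"
  show ?thesis
    by (rule that[of "u 0 - u 0 mod int n"])
      (simp_all add: Zmove_def u_def[symmetric] prefix_sum_Zreduce,
       simp add: u_def prefix_sum_update_pair)
qed

lemma Zadj_Zmove:
  assumes v: "Zvert n m v" and "0 < n" and "k \<le> m" and "d = 1 \<or> d = -1"
    and "1 \<le> k \<Longrightarrow> v k + d \<in> {-1,0,1}" and "k < m \<Longrightarrow> v (Suc k) - d \<in> {-1,0,1}"
  shows "Zadj n m v (Zmove n m v k d)"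
proof -
  define u where "u = v(k := v k + d, Suc k := v (Suc k) - d)"
  have "(\<Sum>i\<le>m+1. u i) = (\<Sum>i\<le>m+1. v i)"
    using prefix_sum_update_pair[of v k d "m+1"] \<open>k \<le> m\<close> by (simp add: u_def prefix_sum_def)
  then have "Zvert n m (Zmove n m v k d)"
    unfolding Zmove_def u_def[symmetric] using assms
    by (intro Zvert_Zreduce) (auto simp: u_def Zvert_def)
  moreover have "coord_eq n m k (v k) (Zmove n m v k d k) (- d)"
    using \<open>k \<le> m\<close> by (auto simp: coord_eq_def Zmove_def Zreduce_def mod_simps)
  moreover have "coord_eq n m (k+1) (v (k+1)) (Zmove n m v k d (k+1)) d"
    using \<open>k \<le> m\<close> by (auto simp: coord_eq_def Zmove_def Zreduce_def mod_simps)
  moreover have "\<forall>j\<le>m+1. j \<notin> {k, k+1} \<longrightarrow> v j = Zmove n m v k d j"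
    using v by (auto simp: Zmove_def Zreduce_def Zvert_def)
  ultimately show ?thesis
    unfolding Zadj_def using v \<open>k \<le> m\<close> \<open>d = 1 \<or> d = -1\<close> by auto
qed

lemma Zwalk_refl: "Zvert n m v \<Longrightarrow> Zwalk n m v v 0"
  unfolding Zwalk_def by (rule exI[of _ "\<lambda>_. v"]) simp

lemma Zwalk_Cons:
  assumes "Zadj n m v w" and "Zwalk n m w z k"
  shows "Zwalk n m v z (Suc k)"
proof -
  obtain f where "f 0 = w" "f k = z" "\<forall>i\<le>k. Zvert n m (f i)" "\<forall>i<k. Zadj n m (f i) (f (Suc i))"
    using assms(2) unfolding Zwalk_def by blast
  then show ?thesis
    unfolding Zwalk_def using assms(1)
    by (intro exI[of _ "\<lambda>i. case i of 0 \<Rightarrow> v | Suc i \<Rightarrow> f i"])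
      (auto simp: Zadj_def split: nat.split)
qed

lemma Zdist_le_walk_length: "Zwalk n m u v k \<Longrightarrow> Zdist n m u v \<le> enat k"
  unfolding Zdist_def by (simp add: INF_lower)

definition potential :: "nat \<Rightarrow> (nat \<Rightarrow> int) \<Rightarrow> int \<Rightarrow> int" where
  "potential m v K = (\<Sum>i\<le>m. \<bar>prefix_sum v i - K\<bar>)"

lemma potential_nonneg: "0 \<le> potential m v K"
  by (simp add: potential_def sum_nonneg)

lemma potential_eq_0_imp_Zzero:
  assumes v: "Zvert n m v" and "int n dvd K" and "potential m v K = 0"
  shows "v = Zzero"
proof -
  have pre: "prefix_sum v i = K" if "i \<le> m" for i
    using assms(3) that by (simp add: potential_def sum_nonneg_eq_0_iff)
  have "K = 0"
    using pre[of 0] v \<open>int n dvd K\<close> zdvd_not_zless[of K "int n"] by (fastforce simp: Zvert_def)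
  have mid: "v i = 0" if "1 \<le> i" "i \<le> m" for i
    using that pre[of i] pre[of "i - 1"] by (cases i) auto
  have "(\<Sum>i\<le>m+1. v i) = v (m+1)"
    using pre[of m] \<open>K = 0\<close> by (simp add: prefix_sum_def)
  then have "v (m+1) = 0"
    using v zdvd_not_zless[of "v (m+1)" "int n"] by (fastforce simp: Zvert_def)
  have "v i = 0" for i
    using v pre[of 0] \<open>K = 0\<close> mid \<open>v (m+1) = 0\<close>
    by (cases rule: linorder_cases[of i "m+1"]; cases "i = 0") (auto simp: Zvert_def)
  then show ?thesis
    by (simp add: Zzero_def fun_eq_iff)
qed

lemma step_toward_target_bounded:
  fixes p q x K :: int
  assumes "\<bar>q - K\<bar> \<le> \<bar>p - K\<bar>" and "p \<noteq> K" and "x \<in> {-1,0,1}"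
  shows "p - q = x \<Longrightarrow> x - sgn (p - K) \<in> {-1,0,1}"
    and "q - p = x \<Longrightarrow> x + sgn (p - K) \<in> {-1,0,1}"
  using assms by (auto simp: abs_if sgn_if)

lemma abs_diff_sgn: "(y::int) \<noteq> 0 \<Longrightarrow> \<bar>y - sgn y\<bar> = \<bar>y\<bar> - 1"
  by (auto simp: abs_if sgn_if)

text \<open>An index where the prefix sum is farthest from K is a global maximum or minimum of
  the prefix sums, so the coordinates next to it have the sign needed for the move.\<close>

lemma Zadj_Zmove_toward:
  assumes v: "Zvert n m v" and "0 < n" and "k \<le> m" and "prefix_sum v k \<noteq> K"
    and farthest: "\<And>i. i \<le> m \<Longrightarrow> \<bar>prefix_sum v i - K\<bar> \<le> \<bar>prefix_sum v k - K\<bar>"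
  shows "Zadj n m v (Zmove n m v k (- sgn (prefix_sum v k - K)))"
proof (rule Zadj_Zmove[OF v \<open>0 < n\<close> \<open>k \<le> m\<close>])
  show "- sgn (prefix_sum v k - K) = 1 \<or> - sgn (prefix_sum v k - K) = -1"
    using \<open>prefix_sum v k \<noteq> K\<close> by (simp add: sgn_if)
next
  assume "1 \<le> k"
  then obtain j where "k = Suc j"
    by (cases k) auto
  then have step: "prefix_sum v k - prefix_sum v j = v k"
    by simp
  have far: "\<bar>prefix_sum v j - K\<bar> \<le> \<bar>prefix_sum v k - K\<bar>"
    using farthest \<open>k = Suc j\<close> \<open>k \<le> m\<close> by simp
  have unit: "v k \<in> {-1,0,1}"
    using v \<open>1 \<le> k\<close> \<open>k \<le> m\<close> by (simp add: Zvert_def)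
  show "v k + - sgn (prefix_sum v k - K) \<in> {-1,0,1}"
    using step_toward_target_bounded(1)[OF far \<open>prefix_sum v k \<noteq> K\<close> unit step] by simp
next
  assume "k < m"
  have step: "prefix_sum v (Suc k) - prefix_sum v k = v (Suc k)"
    by simp
  have far: "\<bar>prefix_sum v (Suc k) - K\<bar> \<le> \<bar>prefix_sum v k - K\<bar>"
    using farthest[of "Suc k"] \<open>k < m\<close> by simp
  have unit: "v (Suc k) \<in> {-1,0,1}"
    using v \<open>k < m\<close> by (simp add: Zvert_def)
  show "v (Suc k) - - sgn (prefix_sum v k - K) \<in> {-1,0,1}"
    using step_toward_target_bounded(2)[OF far \<open>prefix_sum v k \<noteq> K\<close> unit step] by simp
qed

lemma potential_Zmove_toward:
  assumes "k \<le> m" and "prefix_sum v k \<noteq> K"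
  obtains \<alpha> where "int n dvd \<alpha>"
    and "potential m (Zmove n m v k (- sgn (prefix_sum v k - K))) (K - \<alpha>) = potential m v K - 1"
proof -
  let ?d = "- sgn (prefix_sum v k - K)" and ?e = "\<lambda>i. \<bar>prefix_sum v i - K\<bar>"
  obtain \<alpha> where "int n dvd \<alpha>" and \<alpha>:
    "\<And>i. i \<le> m \<Longrightarrow> prefix_sum (Zmove n m v k ?d) i = prefix_sum v i + (if i = k then ?d else 0) - \<alpha>"
    by (rule prefix_sum_Zmove[of n m v k ?d]) (rule that)
  have "\<bar>prefix_sum (Zmove n m v k ?d) i - (K - \<alpha>)\<bar> = ?e i - (if i = k then 1 else 0)"
    if "i \<le> m" for i
    using \<alpha>[OF that] abs_diff_sgn[of "prefix_sum v k - K"] \<open>prefix_sum v k \<noteq> K\<close>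
    by (cases "i = k") (simp_all add: algebra_simps)
  then have "potential m (Zmove n m v k ?d) (K - \<alpha>) = (\<Sum>i\<le>m. ?e i - (if i = k then 1 else 0))"
    unfolding potential_def by (intro sum.cong) auto
  also have "\<dots> = potential m v K - 1"
    using \<open>k \<le> m\<close> by (simp add: potential_def sum_subtractf)
  finally show ?thesis
    using that \<open>int n dvd \<alpha>\<close> by blast
qed

lemma potential_decrease:
  assumes v: "Zvert n m v" and "0 < n" and "int n dvd K" and "0 < potential m v K"
  shows "\<exists>w K'. Zadj n m v w \<and> int n dvd K' \<and> potential m w K' = potential m v K - 1"
proof -
  let ?e = "\<lambda>i. \<bar>prefix_sum v i - K\<bar>"
  obtain k where "k \<le> m" and farthest: "\<And>i. i \<le> m \<Longrightarrow> ?e i \<le> ?e k"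
    using Max_in[of "?e ` {..m}"] Max_ge[of "?e ` {..m}"] by fastforce
  have "prefix_sum v k \<noteq> K"
  proof
    assume "prefix_sum v k = K"
    then have "?e i = 0" if "i \<le> m" for i
      using farthest[OF that] by simp
    then have "potential m v K = 0"
      by (simp add: potential_def)
    then show False
      using assms(4) by simp
  qed
  then obtain \<alpha> where "int n dvd \<alpha>"
    and "potential m (Zmove n m v k (- sgn (prefix_sum v k - K))) (K - \<alpha>) = potential m v K - 1"
    using potential_Zmove_toward[OF \<open>k \<le> m\<close>] by metis
  moreover have "int n dvd K - \<alpha>"
    using \<open>int n dvd K\<close> \<open>int n dvd \<alpha>\<close> by (rule dvd_diff)
  ultimately show ?thesis
    using Zadj_Zmove_toward[OF v \<open>0 < n\<close> \<open>k \<le> m\<close> \<open>prefix_sum v k \<noteq> K\<close> farthest] by blast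
qed

lemma Zdist_le_potential:
  assumes "Zvert n m v" and "0 < n" and "int n dvd K"
  shows "Zdist n m v Zzero \<le> enat (nat (potential m v K))"
proof -
  have "Zwalk n m v Zzero (nat (potential m v K))"
    using assms(1,3)
  proof (induction "nat (potential m v K)" arbitrary: v K)
    case 0
    then have "potential m v K = 0"
      using potential_nonneg[of m v K] by simp
    then show ?case
      using 0 potential_eq_0_imp_Zzero Zwalk_refl by metis
  next
    case (Suc N)
    then have "0 < potential m v K"
      by simp
    then obtain w K' where adj: "Zadj n m v w" and "int n dvd K'"
      and "potential m w K' = potential m v K - 1"
      using potential_decrease[OF Suc.prems(1) \<open>0 < n\<close> Suc.prems(2)] by blast
    then have "N = nat (potential m w K')"
      using Suc.hyps(2) by simp
    moreover have "Zvert n m w"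
      using adj by (simp add: Zadj_def)
    ultimately have "Zwalk n m w Zzero N"
      using Suc.hyps(1) \<open>int n dvd K'\<close> by simp
    then show ?case
      unfolding Suc.hyps(2)[symmetric] by (rule Zwalk_Cons[OF adj])
  qed
  then show ?thesis
    by (rule Zdist_le_walk_length)
qed

definition pivot_sum :: "(nat \<Rightarrow> int) \<Rightarrow> int \<Rightarrow> int" where
  "pivot_sum v p = (\<Sum>i\<in>{0..p}. v (nat i))"

lemma Piv_iff: "p \<in> Piv n m v \<longleftrightarrow> -1 \<le> p \<and> p \<le> int m + 1 \<and> int n dvd pivot_sum v p"
  by (simp add: Piv_def pivot_sum_def)

lemma pivot_sum_int: "pivot_sum v (int k) = prefix_sum v k"
proof -
  have "pivot_sum v (int k) = (\<Sum>i\<in>int ` {0..k}. v (nat i))"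
    by (simp add: pivot_sum_def image_int_atLeastAtMost)
  also have "\<dots> = prefix_sum v k"
    by (simp add: sum.reindex prefix_sum_def atLeast0AtMost)
  finally show ?thesis .
qed

lemma pivot_sum_neg: "p < 0 \<Longrightarrow> pivot_sum v p = 0"
  by (simp add: pivot_sum_def)

lemma pivot_sum_split:
  "-1 \<le> a \<Longrightarrow> a \<le> b \<Longrightarrow> pivot_sum v b = pivot_sum v a + (\<Sum>i\<in>{a+1..b}. v (nat i))"
  unfolding pivot_sum_def
  by (subst sum.union_disjoint[symmetric]) (auto intro: sum.cong)

lemma finite_Piv: "finite (Piv n m v)"
  by (rule finite_subset[of _ "{-1..int m + 1}"]) (auto simp: Piv_def)

lemma p_l_in_Piv: "p_l n m v \<in> Piv n m v \<and> 2 * p_l n m v < int m"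
  and le_p_l: "p \<in> Piv n m v \<Longrightarrow> 2 * p < int m \<Longrightarrow> p \<le> p_l n m v"
proof -
  have "-1 \<in> {p \<in> Piv n m v. 2 * p < int m}"
    by (simp add: Piv_iff pivot_sum_neg)
  then have "Max {p \<in> Piv n m v. 2 * p < int m} \<in> {p \<in> Piv n m v. 2 * p < int m}"
    using finite_Piv by (intro Max_in) auto
  then show "p_l n m v \<in> Piv n m v \<and> 2 * p_l n m v < int m"
    by (simp add: p_l_def)
  show "p \<in> Piv n m v \<Longrightarrow> 2 * p < int m \<Longrightarrow> p \<le> p_l n m v"
    using finite_Piv unfolding p_l_def by (intro Max_ge) auto
qed

lemma p_r_in_Piv: "Zvert n m v \<Longrightarrow> p_r n m v \<in> Piv n m v \<and> int m \<le> 2 * p_r n m v"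
  and p_r_le: "p \<in> Piv n m v \<Longrightarrow> int m \<le> 2 * p \<Longrightarrow> p_r n m v \<le> p"
proof -
  assume "Zvert n m v"
  then have "int m + 1 \<in> {p \<in> Piv n m v. int m \<le> 2 * p}"
    using pivot_sum_int[of v "m+1"] by (simp add: Piv_iff Zvert_def prefix_sum_def add.commute)
  then have "Min {p \<in> Piv n m v. int m \<le> 2 * p} \<in> {p \<in> Piv n m v. int m \<le> 2 * p}"
    using finite_Piv by (intro Min_in) auto
  then show "p_r n m v \<in> Piv n m v \<and> int m \<le> 2 * p_r n m v"
    by (simp add: p_r_def)
next
  show "p \<in> Piv n m v \<Longrightarrow> int m \<le> 2 * p \<Longrightarrow> p_r n m v \<le> p"
    using finite_Piv unfolding p_r_def by (intro Min_le) auto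
qed

lemma sum_pos_part_sub_int:
  fixes a :: int
  assumes "a \<le> int m"
  shows "(\<Sum>i\<le>m. max 0 (a - int i)) = (\<Sum>i\<in>{1..a}. i)"
proof -
  have "(\<Sum>i\<le>m. max 0 (a - int i)) = (\<Sum>i<nat a. a - int i)"
    by (rule sum.mono_neutral_cong_right) (use assms in auto)
  also have "\<dots> = (\<Sum>i\<in>{1..a}. i)"
    by (rule sum.reindex_bij_witness[where i="\<lambda>j. nat (a - j)" and j="\<lambda>i. a - int i"]) auto
  finally show ?thesis .
qed

lemma sum_pos_part_int_sub:
  fixes b :: int
  assumes "0 \<le> b"
  shows "(\<Sum>i\<le>m. max 0 (int i - b)) = (\<Sum>i\<in>{1..int m - b}. i)"
proof -
  have "(\<Sum>i\<le>m. max 0 (int i - b)) = (\<Sum>i=0..m. max 0 ((int m - b) - int (m - i)))"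
    by (auto simp: atMost_atLeast0 intro!: sum.cong)
  also have "\<dots> = (\<Sum>i\<le>m. max 0 ((int m - b) - int i))"
    by (subst sum.atLeastAtMost_rev) (simp add: atMost_atLeast0)
  also have "\<dots> = (\<Sum>i\<in>{1..int m - b}. i)"
    by (rule sum_pos_part_sub_int) (use assms in simp)
  finally show ?thesis .
qed

context
  fixes n m :: nat and v :: "nat \<Rightarrow> int" and a b :: int
  assumes v: "Zvert n m v" and n_pos: "0 < n"
    and a_b: "-1 \<le> a" "a < b" "b \<le> int m + 1"
    and dvd_pivot_sum: "int n dvd pivot_sum v a"
    and pivot_sum_b: "pivot_sum v b = pivot_sum v a + int n"
    and no_pivot: "\<And>p. a < p \<Longrightarrow> p < b \<Longrightarrow> p \<notin> Piv n m v"
begin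

lemma not_dvd_prefix_sum_between: "a < int k \<Longrightarrow> int k < b \<Longrightarrow> \<not> int n dvd prefix_sum v k"
  using no_pivot[of "int k"] a_b by (simp add: Piv_iff pivot_sum_int)

lemma pivot_sum_le_prefix_sum:
  assumes "a < int i" and "int i < b"
  shows "pivot_sum v a \<le> prefix_sum v i"
proof (rule ccontr)
  assume below: "\<not> ?thesis"
  obtain r where "i \<le> r" "r \<le> m" "int r \<le> b" "pivot_sum v a < prefix_sum v r"
  proof (cases "b \<le> int m")
    case True
    then show ?thesis
      using that[of "nat b"] assms a_b n_pos pivot_sum_b pivot_sum_int[of v "nat b"] by auto
  next
    case False
    then have "b = int m + 1"
      using a_b by simp
    then have "pivot_sum v b = prefix_sum v m + v (m+1)"
      using pivot_sum_int[of v "m+1"] by (simp add: add.commute)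
    moreover have "v (m+1) < int n"
      using v by (simp add: Zvert_def)
    ultimately show ?thesis
      using that[of m] assms \<open>b = int m + 1\<close> pivot_sum_b by auto
  qed
  moreover obtain k where "i \<le> k" "k \<le> r" "prefix_sum v k = pivot_sum v a"
    using prefix_sum_intermediate_value[OF v, of i r "pivot_sum v a"] below calculation by auto
  ultimately show False
    using not_dvd_prefix_sum_between[of k] assms dvd_pivot_sum by (cases "k = r") auto
qed

lemma prefix_sum_le_pivot_sum:
  assumes "a < int i" and "int i < b"
  shows "prefix_sum v i \<le> pivot_sum v b"
proof (rule ccontr)
  assume above: "\<not> ?thesis"
  have "i \<le> m"
    using assms a_b by simp
  obtain l where "l \<le> i" "a \<le> int l" "prefix_sum v l < pivot_sum v b"
  proof (cases "0 \<le> a")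
    case True
    then show ?thesis
      using that[of "nat a"] assms n_pos pivot_sum_b pivot_sum_int[of v "nat a"] by auto
  next
    case False
    moreover have "v 0 < int n"
      using v by (simp add: Zvert_def)
    ultimately show ?thesis
      using that[of 0] pivot_sum_b pivot_sum_neg[of a v] by auto
  qed
  moreover obtain k where "l \<le> k" "k \<le> i" "prefix_sum v k = pivot_sum v b"
    using prefix_sum_intermediate_value[OF v, of l i "pivot_sum v b"] above calculation \<open>i \<le> m\<close>
    by auto
  ultimately show False
    using not_dvd_prefix_sum_between[of k] assms dvd_pivot_sum pivot_sum_b above
    by (cases "k = l") auto
qed

lemma prefix_sum_distance_le:
  assumes "i \<le> m"
  shows "\<bar>prefix_sum v i - pivot_sum v a\<bar> + \<bar>prefix_sum v i - pivot_sum v b\<bar>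
    \<le> int n + 2 * max 0 (a - int i) + 2 * max 0 (int i - b)"
proof -
  consider "int i \<le> a" | "b \<le> int i" | "a < int i" "int i < b"
    by linarith
  then show ?thesis
  proof cases
    case 1
    then have "\<bar>prefix_sum v (nat a) - prefix_sum v i\<bar> \<le> a - int i"
      using prefix_sum_lipschitz[OF v, of i "nat a"] a_b by auto
    then show ?thesis
      using 1 pivot_sum_int[of v "nat a"] pivot_sum_b a_b by auto
  next
    case 2
    then have "\<bar>prefix_sum v i - prefix_sum v (nat b)\<bar> \<le> int i - b"
      using prefix_sum_lipschitz[OF v, of "nat b" i] a_b assms by auto
    then show ?thesis
      using 2 pivot_sum_int[of v "nat b"] pivot_sum_b a_b by auto
  next
    case 3
    then show ?thesis
      using pivot_sum_le_prefix_sum prefix_sum_le_pivot_sum pivot_sum_b by auto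
  qed
qed

lemma potential_pivot_sums_le:
  "potential m v (pivot_sum v a) + potential m v (pivot_sum v b)
    \<le> int n * (int m + 1) + 2 * (\<Sum>i\<in>{1..a}. i) + 2 * (\<Sum>i\<in>{1..int m - b}. i)"
proof -
  have "potential m v (pivot_sum v a) + potential m v (pivot_sum v b)
      = (\<Sum>i\<le>m. \<bar>prefix_sum v i - pivot_sum v a\<bar> + \<bar>prefix_sum v i - pivot_sum v b\<bar>)"
    by (simp add: potential_def sum.distrib)
  also have "\<dots> \<le> (\<Sum>i\<le>m. int n + 2 * max 0 (a - int i) + 2 * max 0 (int i - b))"
    by (rule sum_mono) (simp add: prefix_sum_distance_le)
  also have "\<dots> = int n * (int m + 1) + 2 * (\<Sum>i\<le>m. max 0 (a - int i))
      + 2 * (\<Sum>i\<le>m. max 0 (int i - b))"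
    by (simp add: sum.distrib sum_distrib_left algebra_simps)
  also have "\<dots> = int n * (int m + 1) + 2 * (\<Sum>i\<in>{1..a}. i) + 2 * (\<Sum>i\<in>{1..int m - b}. i)"
    using a_b by (simp add: sum_pos_part_sub_int sum_pos_part_int_sub)
  finally show ?thesis .
qed

end

theorem lemma5p25:
  fixes n m :: nat and v :: "nat \<Rightarrow> int"
  assumes "1 < n" and "n \<le> m"
    and "Zvert n m v"
    and "(\<Sum>i\<in>I_c n m v. v (nat i)) = int n"
  shows "Zdist n m v Zzero \<le>
    enat (nat ((\<Sum>i\<in>{1..p_l n m v}. i) + (\<Sum>i\<in>{1..int m - p_r n m v}. i)
               + (int n * (int m + 1)) div 2))"
proof -
  let ?a = "p_l n m v" and ?b = "p_r n m v"
  let ?bound = "(\<Sum>i\<in>{1..?a}. i) + (\<Sum>i\<in>{1..int m - ?b}. i) + (int n * (int m + 1)) div 2"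
  have a: "?a \<in> Piv n m v" "2 * ?a < int m"
    using p_l_in_Piv by auto
  have b: "?b \<in> Piv n m v" "int m \<le> 2 * ?b"
    using p_r_in_Piv[OF assms(3)] by auto
  have no_pivot: "p \<notin> Piv n m v" if "?a < p" "p < ?b" for p
    using that le_p_l[of p] p_r_le[of p] by force
  have "pivot_sum v ?b = pivot_sum v ?a + int n"
    using pivot_sum_split[of ?a ?b v] a b assms(4) by (simp add: Piv_iff I_c_def)
  then have "potential m v (pivot_sum v ?a) + potential m v (pivot_sum v ?b)
      \<le> int n * (int m + 1) + 2 * (\<Sum>i\<in>{1..?a}. i) + 2 * (\<Sum>i\<in>{1..int m - ?b}. i)"
    using potential_pivot_sums_le[OF assms(3) _ _ _ _ _ _ no_pivot] a b assms(1) by (simp add: Piv_iff)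
  then have "potential m v (pivot_sum v ?a) \<le> ?bound \<or> potential m v (pivot_sum v ?b) \<le> ?bound"
    by linarith
  moreover have "Zdist n m v Zzero \<le> enat (nat (potential m v (pivot_sum v p)))" if "p \<in> Piv n m v" for p
    using Zdist_le_potential[OF assms(3)] that assms(1) by (simp add: Piv_iff)
  ultimately show ?thesis
    using a(1) b(1) by (meson enat_ord_simps(1) nat_mono order_trans)
qed

end
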